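(* Let $X$ be a Polish space and $\lambda$ a probability measure on $X$. Let ${\mathbf T}$ be a thinning kernel of type 2 with weights $(t_{n,j})$ satisfying $t_{m,m}>0$ for all $m\ge0$, and normalizations $Z_m$. Let $(p_n)_{n\in\mathbb N_0}$ be non-negative numbers with $\Xi=\sum_{n\ge0}p_n/n!\in(0,\infty)$ and such that $p_{n_0}=0$ implies $p_n=0$ for all $n\ge n_0$. Let ${\mathsf P}$ be the mixed sample process $${\mathsf P}(\phi)=\frac1\Xi\sum_{n\ge0}\frac{p_n}{n!}\int\phi(\delta_{x_1}+\dots+\delta_{x_n})\,\lambda^n(\mathrm dx_1,\dots,\mathrm dx_n).$$ Then for all non-negative measurable $g$ on $X\times\mathcal M_f(X)$, $$\iint g(x,\mu)\,\delta(\mu,x)\,\mu(\mathrm dx)\,{\mathsf P}(\mathrm d\mu)=\iint g(x,\mu+\delta_x)\,\pi(\mu,\mathrm dx)\,{\mathsf P}(\mathrm d\mu).$$ Here, for ${\mathsf P}$-a.e. $\mu$ with $\mu(X)=m$, $$\pi(\mu,\mathrm dx)=\frac{Z_{m+1}}{Z_m}\,\frac{t_{m+1,m}}{t_{m,m}}\,\frac{p_{m+1}}{p_m}\,\lambda(\mathrm dx),\qquad\delta(\mu,x)=\frac{Z_m}{Z_{m-1}}\cdot\frac{t_{m,m-1}}{t_{m-1,m-1}}.$$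
   Context: $\mathcal M_f(X)$ denotes the set of finite counting measures on $X$, and $|\mu|=\mu(X)$. $\mu^{-[m]}$ is the $m$-th falling factorial measure of $\mu$, defined by $\int g\,\mathrm d\mu^{-[m]}=\int\cdots\int g(y_1,\dots,y_m)(\mu-\delta_{y_1}-\dots-\delta_{y_{m-1}})(\mathrm dy_m)\cdots\mu(\mathrm dy_1)$. Write $\delta_{\mathbf y}=\delta_{y_1}+\dots+\delta_{y_m}$. A thinning kernel of type 2 is given by non-negative numbers $(t_{n,j})_{0\le j\le n}$ via $${\mathbf T}_\mu(\phi)=Z_\mu\sum_{m\ge0}\frac{t_{|\mu|,m}}{m!}\int\phi(\delta_{\mathbf y})\,\mu^{-[m]}(\mathrm d{\mathbf y}),\qquad Z_\mu^{-1}=\sum_{j=0}^{|\mu|}\binom{|\mu|}{j}t_{|\mu|,j}.$$ Since $Z_\mu$ depends only on $|\mu|=m$, it is written $Z_m$. *)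

theory Defs
  imports "HOL-Probability.Probability" "HOL-Library.Multiset"
begin

text \<open>Finite counting measures on X are represented by multisets over X.
  The sigma-algebra on M_f(X) is the standard one generated by the maps
  mu |-> mu(B), B measurable.\<close>
definition mset_measure :: "'a measure \<Rightarrow> 'a multiset measure" where
  "mset_measure M = sigma UNIV
     {{\<mu>. size (filter_mset (\<lambda>x. x \<in> B) \<mu>) = k} | B k. B \<in> sets M}"

definition Zn :: "(nat \<Rightarrow> nat \<Rightarrow> real) \<Rightarrow> nat \<Rightarrow> real" where
  "Zn t m = 1 / (\<Sum>j\<le>m. real (m choose j) * t m j)"

definition mixed_sample ::
  "'a measure \<Rightarrow> (nat \<Rightarrow> real) \<Rightarrow> ('a multiset \<Rightarrow> ennreal) \<Rightarrow> ennreal" where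
  "mixed_sample L p \<phi> =
     (\<Sum>n. ennreal (p n / (fact n * (\<Sum>k. p k / fact k))) *
          (\<integral>\<^sup>+ xs. \<phi> (mset (map xs [0..<n])) \<partial>(PiM {..<n} (\<lambda>_. L))))"

text \<open>Density of pi(mu, dx) w.r.t. lambda, for |mu| = m (p m > 0).\<close>
definition pi_dens :: "(nat \<Rightarrow> nat \<Rightarrow> real) \<Rightarrow> (nat \<Rightarrow> real) \<Rightarrow> nat \<Rightarrow> real" where
  "pi_dens t p m = Zn t (m + 1) / Zn t m * (t (m + 1) m / t m m) * (p (m + 1) / p m)"

definition delta_fn :: "(nat \<Rightarrow> nat \<Rightarrow> real) \<Rightarrow> nat \<Rightarrow> real" where
  "delta_fn t m = Zn t m / Zn t (m - 1) * (t m (m - 1) / t (m - 1) (m - 1))"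

end

theory Submission
  imports Defs
begin

text \<open>The mixed sample process is a mixture over the sample size n, so the identity can be checked
  size by size. For an i.i.d. sample x of size m+1, summing a function over the points of the
  sample and integrating is, by exchangeability of the coordinates and Fubini, the same as
  m+1 times integrating over a sample of size m with one independent extra point added (the
  Mecke identity of a binomial process). It therefore suffices that the mixture weights balance:
  (p_(m+1) / (m+1)!) (m+1) delta(m+1) = (p_m / m!) pi(m), which is immediate from the definitions
  of delta and pi; when p_m = 0 both sides vanish because then p_(m+1) = 0.\<close>

lemma sum_mset_image_mset_map_upt:
  "(\<Sum>\<^sub># (image_mset f (mset (map xs [0..<n])))) = (\<Sum>i<n. f (xs i))"
  by (induction n) (auto simp: add.commute)

lemma mset_map_upt_fun_upd:
  "mset (map (xs(m := y)) [0..<Suc m]) = add_mset y (mset (map xs [0..<m]))"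
proof -
  have "map (xs(m := y)) [0..<m] = map xs [0..<m]" by (rule map_cong) auto
  then show ?thesis by simp
qed

lemma mset_map_upt_reindex:
  assumes "bij_betw \<sigma> {..<n} {..<n}"
  shows "mset (map (\<lambda>k. xs (\<sigma> k)) [0..<n]) = mset (map xs [0..<n])"
proof -
  have "mset (map (\<lambda>k. xs (\<sigma> k)) [0..<n]) = image_mset xs (image_mset \<sigma> (mset_set {..<n}))"
    by (simp add: atLeast0LessThan multiset.map_comp o_def)
  also have "image_mset \<sigma> (mset_set {..<n}) = mset_set {..<n}"
    using assms by (simp add: image_mset_mset_set bij_betw_def)
  finally show ?thesis by (simp add: atLeast0LessThan)
qed

lemma measurable_mset_map_upt:
  assumes "{..<n} \<subseteq> I"
  shows "(\<lambda>xs. mset (map xs [0..<n])) \<in> PiM I (\<lambda>_. M) \<rightarrow>\<^sub>M mset_measure M"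
  unfolding mset_measure_def
proof (rule measurable_measure_of)
  fix A assume "A \<in> {{\<mu>. size (filter_mset (\<lambda>x. x \<in> B) \<mu>) = k} | B k. B \<in> sets M}"
  then obtain B k where A: "A = {\<mu>. size (filter_mset (\<lambda>x. x \<in> B) \<mu>) = k}" and B: "B \<in> sets M"
    by blast
  have count: "real (size (filter_mset (\<lambda>x. x \<in> B) (mset (map xs [0..<n]))))
      = (\<Sum>i<n. if xs i \<in> B then 1 else 0)" for xs
    by (induction n) auto
  have "(\<lambda>xs. mset (map xs [0..<n])) -` A \<inter> space (PiM I (\<lambda>_. M))
      = {xs \<in> space (PiM I (\<lambda>_. M)). (\<Sum>i<n. if xs i \<in> B then 1 else 0) = real k}"
    unfolding A by (auto simp flip: count)
  also have "\<dots> \<in> sets (PiM I (\<lambda>_. M))"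
  proof -
    have "(\<lambda>xs. \<Sum>i<n. if xs i \<in> B then 1 else 0 :: real) \<in> borel_measurable (PiM I (\<lambda>_. M))"
      using assms B by (intro borel_measurable_sum) (auto intro!: measurable_If_set)
    then show ?thesis by measurable
  qed
  finally show "(\<lambda>xs. mset (map xs [0..<n])) -` A \<inter> space (PiM I (\<lambda>_. M)) \<in> sets (PiM I (\<lambda>_. M))" .
qed auto

lemma measurable_component_mset_map_upt:
  assumes "h \<in> borel_measurable (M \<Otimes>\<^sub>M mset_measure M)" and "j \<in> I" and "{..<n} \<subseteq> I"
  shows "(\<lambda>xs. h (xs j, mset (map xs [0..<n]))) \<in> borel_measurable (PiM I (\<lambda>_. M))"
  using assms(1)
  by (rule measurable_compose[OF measurable_Pair[OF
        measurable_component_singleton[OF assms(2)] measurable_mset_map_upt[OF assms(3)]]])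

lemma measurable_nn_integral_add_mset:
  assumes "prob_space L" and h: "h \<in> borel_measurable (L \<Otimes>\<^sub>M mset_measure L)"
  shows "(\<lambda>xs. \<integral>\<^sup>+ y. h (y, add_mset y (mset (map xs [0..<m]))) \<partial>L)
           \<in> borel_measurable (PiM {..<m} (\<lambda>_. L))"
proof -
  interpret sigma_finite_measure L
    using assms(1) by (simp add: prob_space_imp_sigma_finite)
  define F where "F xs = h (xs m, mset (map xs [0..<Suc m]))" for xs
  have "F \<in> borel_measurable (PiM (insert m {..<m}) (\<lambda>_. L))"
    unfolding F_def by (rule measurable_component_mset_map_upt[OF h]) auto
  then have "(\<lambda>(xs, y). F (xs(m := y))) \<in> borel_measurable (PiM {..<m} (\<lambda>_. L) \<Otimes>\<^sub>M L)"
    using measurable_compose[OF measurable_add_dim] by (simp add: case_prod_beta')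
  then have "(\<lambda>(xs, y). h (y, add_mset y (mset (map xs [0..<m]))))
               \<in> borel_measurable (PiM {..<m} (\<lambda>_. L) \<Otimes>\<^sub>M L)"
    by (simp add: F_def mset_map_upt_fun_upd)
  then show ?thesis by (rule borel_measurable_nn_integral)
qed

lemma nn_integral_PiM_swap_component:
  assumes L: "prob_space L" and h: "h \<in> borel_measurable (L \<Otimes>\<^sub>M mset_measure L)"
    and "i < Suc m"
  shows "(\<integral>\<^sup>+ xs. h (xs i, mset (map xs [0..<Suc m])) \<partial>PiM {..<Suc m} (\<lambda>_. L))
       = (\<integral>\<^sup>+ xs. h (xs m, mset (map xs [0..<Suc m])) \<partial>PiM {..<Suc m} (\<lambda>_. L))"
proof -
  define I where "I = {..<Suc m}"
  define \<sigma> where "\<sigma> = Transposition.transpose i m"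
  define \<tau> where "\<tau> xs = (\<lambda>k\<in>I. xs (\<sigma> k))" for xs :: "nat \<Rightarrow> 'a"
  have bij: "bij_betw \<sigma> I I"
    unfolding \<sigma>_def I_def using assms(3) by (intro bij_betw_transpose_iff) auto
  have distr: "distr (PiM I (\<lambda>_. L)) (PiM I (\<lambda>_. L)) \<tau> = PiM I (\<lambda>_. L)"
    unfolding \<tau>_def using distr_PiM_reindex[of I "\<lambda>_. L" \<sigma> I] L bij by (auto simp: bij_betw_def)
  have \<tau>: "\<tau> \<in> PiM I (\<lambda>_. L) \<rightarrow>\<^sub>M PiM I (\<lambda>_. L)"
    unfolding \<tau>_def using bij
    by (intro measurable_restrict measurable_component_singleton) (auto simp: bij_betw_def)
  have \<tau>_eq: "h (\<tau> xs m, mset (map (\<tau> xs) [0..<Suc m])) = h (xs i, mset (map xs [0..<Suc m]))" for xs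
  proof -
    have "map (\<tau> xs) [0..<Suc m] = map (\<lambda>k. xs (\<sigma> k)) [0..<Suc m]"
      by (auto simp: \<tau>_def I_def)
    moreover have "\<tau> xs m = xs i"
      by (simp add: \<tau>_def I_def \<sigma>_def)
    moreover have "bij_betw \<sigma> {..<Suc m} {..<Suc m}"
      using bij by (simp only: I_def)
    ultimately show ?thesis
      by (simp only: mset_map_upt_reindex)
  qed
  have "(\<integral>\<^sup>+ xs. h (xs m, mset (map xs [0..<Suc m])) \<partial>PiM I (\<lambda>_. L))
      = (\<integral>\<^sup>+ xs. h (xs m, mset (map xs [0..<Suc m])) \<partial>distr (PiM I (\<lambda>_. L)) (PiM I (\<lambda>_. L)) \<tau>)"
    by (simp only: distr)
  also have "\<dots> = (\<integral>\<^sup>+ xs. h (\<tau> xs m, mset (map (\<tau> xs) [0..<Suc m])) \<partial>PiM I (\<lambda>_. L))"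
    by (rule nn_integral_distr[OF \<tau>]) (unfold distr, rule measurable_component_mset_map_upt[OF h], auto simp: I_def)
  finally show ?thesis
    by (simp only: \<tau>_eq I_def)
qed

lemma nn_integral_sum_mset_sample:
  assumes L: "prob_space L" and h: "h \<in> borel_measurable (L \<Otimes>\<^sub>M mset_measure L)"
  shows "(\<integral>\<^sup>+ xs. (\<Sum>\<^sub># (image_mset (\<lambda>x. h (x, mset (map xs [0..<Suc m]))) (mset (map xs [0..<Suc m]))))
            \<partial>PiM {..<Suc m} (\<lambda>_. L))
       = of_nat (Suc m) *
           (\<integral>\<^sup>+ xs. (\<integral>\<^sup>+ y. h (y, add_mset y (mset (map xs [0..<m]))) \<partial>L) \<partial>PiM {..<m} (\<lambda>_. L))"
proof -
  interpret product_sigma_finite "\<lambda>_. L"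
    unfolding product_sigma_finite_def using L by (simp add: prob_space_imp_sigma_finite)
  let ?H = "\<lambda>j xs. h (xs j, mset (map xs [0..<Suc m]))"
  have H_m: "?H m \<in> borel_measurable (PiM (insert m {..<m}) (\<lambda>_. L))"
    by (rule measurable_component_mset_map_upt[OF h]) auto
  have "(\<integral>\<^sup>+ xs. (\<Sum>i<Suc m. ?H i xs) \<partial>PiM {..<Suc m} (\<lambda>_. L))
      = (\<Sum>i<Suc m. \<integral>\<^sup>+ xs. ?H i xs \<partial>PiM {..<Suc m} (\<lambda>_. L))"
    by (rule nn_integral_sum) (rule measurable_component_mset_map_upt[OF h], auto)
  also have "\<dots> = (\<Sum>i<Suc m. \<integral>\<^sup>+ xs. ?H m xs \<partial>PiM {..<Suc m} (\<lambda>_. L))"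
    by (intro sum.cong refl nn_integral_PiM_swap_component[OF L h]) simp
  also have "\<dots> = of_nat (Suc m) * (\<integral>\<^sup>+ xs. ?H m xs \<partial>PiM (insert m {..<m}) (\<lambda>_. L))"
    by (simp add: lessThan_Suc)
  also have "(\<integral>\<^sup>+ xs. ?H m xs \<partial>PiM (insert m {..<m}) (\<lambda>_. L))
      = (\<integral>\<^sup>+ xs. (\<integral>\<^sup>+ y. ?H m (xs(m := y)) \<partial>L) \<partial>PiM {..<m} (\<lambda>_. L))"
    by (rule product_nn_integral_insert[OF _ _ H_m]) auto
  finally show ?thesis
    by (simp only: sum_mset_image_mset_map_upt mset_map_upt_fun_upd fun_upd_same)
qed

lemma Zn_nonneg:
  assumes "\<And>j. j \<le> m \<Longrightarrow> t m j \<ge> 0"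
  shows "Zn t m \<ge> 0"
  unfolding Zn_def using assms by (intro divide_nonneg_nonneg sum_nonneg) auto

lemma delta_fn_Suc_nonneg:
  assumes "\<And>n j. j \<le> n \<Longrightarrow> t n j \<ge> 0"
  shows "delta_fn t (Suc m) \<ge> 0"
  unfolding delta_fn_def using assms Zn_nonneg[of "Suc m" t] Zn_nonneg[of m t]
  by (intro mult_nonneg_nonneg divide_nonneg_nonneg) auto

lemma pi_dens_eq_delta_fn:
  "pi_dens t p m = delta_fn t (Suc m) * (p (Suc m) / p m)"
  by (simp add: pi_dens_def delta_fn_def)

lemma mixture_weight_balance:
  fixes p :: "nat \<Rightarrow> real"
  assumes "p m = 0 \<Longrightarrow> p (Suc m) = 0"
  shows "p (Suc m) / (fact (Suc m) * \<Xi>) * real (Suc m) * delta_fn t (Suc m)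
       = p m / (fact m * \<Xi>) * pi_dens t p m"
proof (cases "p m = 0")
  case True
  then show ?thesis using assms by simp
next
  case False
  then show ?thesis
    by (simp add: pi_dens_eq_delta_fn fact_Suc field_simps del: of_nat_Suc)
qed

definition mixed_sample_term ::
  "'a measure \<Rightarrow> (nat \<Rightarrow> real) \<Rightarrow> ('a multiset \<Rightarrow> ennreal) \<Rightarrow> nat \<Rightarrow> ennreal" where
  "mixed_sample_term L p \<phi> n =
     ennreal (p n / (fact n * (\<Sum>k. p k / fact k))) *
     (\<integral>\<^sup>+ xs. \<phi> (mset (map xs [0..<n])) \<partial>(PiM {..<n} (\<lambda>_. L)))"

lemma mixed_sample_shift:
  assumes "mixed_sample_term L p \<phi> 0 = 0"
    and "\<And>m. mixed_sample_term L p \<phi> (Suc m) = mixed_sample_term L p \<psi> m"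
  shows "mixed_sample L p \<phi> = mixed_sample L p \<psi>"
proof -
  have "mixed_sample L p \<phi> = (\<Sum>n. mixed_sample_term L p \<phi> n)"
    unfolding mixed_sample_def mixed_sample_term_def ..
  also have "\<dots> = (\<Sum>m. mixed_sample_term L p \<phi> (Suc m))"
    using suminf_offset[of "mixed_sample_term L p \<phi>" 1] assms(1) by (simp add: summableI)
  also have "\<dots> = (\<Sum>m. mixed_sample_term L p \<psi> m)"
    by (simp only: assms(2))
  also have "\<dots> = mixed_sample L p \<psi>"
    unfolding mixed_sample_def mixed_sample_term_def ..
  finally show ?thesis .
qed

lemma mixed_sample_term_Mecke:
  fixes p :: "nat \<Rightarrow> real"
  assumes L: "prob_space L" and g: "g \<in> borel_measurable (L \<Otimes>\<^sub>M mset_measure L)"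
    and t: "\<And>n j. j \<le> n \<Longrightarrow> t n j \<ge> 0"
    and p: "\<And>n. p n \<ge> 0" and \<Xi>: "(\<Sum>k. p k / fact k) \<ge> 0"
    and p_zero: "p m = 0 \<Longrightarrow> p (Suc m) = 0"
  shows "mixed_sample_term L p
           (\<lambda>\<mu>. \<Sum>\<^sub># (image_mset (\<lambda>x. g (x, \<mu>) * ennreal (delta_fn t (size \<mu>))) \<mu>)) (Suc m)
       = mixed_sample_term L p
           (\<lambda>\<mu>. ennreal (pi_dens t p (size \<mu>)) * (\<integral>\<^sup>+ x. g (x, add_mset x \<mu>) \<partial>L)) m"
proof -
  define c where "c n = p n / (fact n * (\<Sum>k. p k / fact k))" for n
  define \<delta> where "\<delta> = delta_fn t (Suc m)"
  define J where "J = (\<integral>\<^sup>+ xs. (\<integral>\<^sup>+ y. g (y, add_mset y (mset (map xs [0..<m]))) \<partial>L) \<partial>PiM {..<m} (\<lambda>_. L))"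
  have c: "c n \<ge> 0" for n
    unfolding c_def using p[of n] \<Xi> by simp
  have \<delta>: "\<delta> \<ge> 0"
    unfolding \<delta>_def by (rule delta_fn_Suc_nonneg[OF t])
  have \<pi>: "pi_dens t p m \<ge> 0"
    using \<delta> p by (simp add: pi_dens_eq_delta_fn \<delta>_def)
  have "mixed_sample_term L p
           (\<lambda>\<mu>. \<Sum>\<^sub># (image_mset (\<lambda>x. g (x, \<mu>) * ennreal (delta_fn t (size \<mu>))) \<mu>)) (Suc m)
      = ennreal (c (Suc m)) * (\<integral>\<^sup>+ xs. (\<Sum>\<^sub># (image_mset (\<lambda>x. g (x, mset (map xs [0..<Suc m])))
           (mset (map xs [0..<Suc m])))) * ennreal \<delta> \<partial>PiM {..<Suc m} (\<lambda>_. L))"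
    by (simp only: mixed_sample_term_def c_def \<delta>_def sum_mset_distrib_right size_mset length_map
        length_upt diff_zero)
  also have "\<dots> = ennreal (c (Suc m)) * (of_nat (Suc m) * J * ennreal \<delta>)"
  proof -
    have "(\<lambda>xs. \<Sum>\<^sub># (image_mset (\<lambda>x. g (x, mset (map xs [0..<Suc m]))) (mset (map xs [0..<Suc m]))))
            \<in> borel_measurable (PiM {..<Suc m} (\<lambda>_. L))"
      unfolding sum_mset_image_mset_map_upt
      by (intro borel_measurable_sum measurable_component_mset_map_upt[OF g]) auto
    then show ?thesis
      by (simp only: nn_integral_multc nn_integral_sum_mset_sample[OF L g] J_def)
  qed
  also have "\<dots> = ennreal (c (Suc m) * real (Suc m) * \<delta>) * J"
    using c \<delta> by (simp add: ennreal_mult ennreal_of_nat_eq_real_of_nat mult_ac del: of_nat_Suc)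
  also have "c (Suc m) * real (Suc m) * \<delta> = c m * pi_dens t p m"
    unfolding c_def \<delta>_def by (rule mixture_weight_balance[where p = p, OF p_zero])
  also have "ennreal (c m * pi_dens t p m) * J = ennreal (c m) * (ennreal (pi_dens t p m) * J)"
    using c \<pi> by (simp add: ennreal_mult mult_ac)
  also have "\<dots> = mixed_sample_term L p
           (\<lambda>\<mu>. ennreal (pi_dens t p (size \<mu>)) * (\<integral>\<^sup>+ x. g (x, add_mset x \<mu>) \<partial>L)) m"
    unfolding mixed_sample_term_def J_def c_def size_mset length_map length_upt diff_zero
    using measurable_nn_integral_add_mset[OF L g] by (simp add: nn_integral_cmult)
  finally show ?thesis .
qed

theorem mainTheorem10:
  fixes L :: "'a::polish_space measure"
    and t :: "nat \<Rightarrow> nat \<Rightarrow> real"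
    and p :: "nat \<Rightarrow> real"
    and g :: "'a \<times> 'a multiset \<Rightarrow> ennreal"
  assumes "prob_space L"
    and "sets L = sets borel"
    and "\<And>n j. j \<le> n \<Longrightarrow> t n j \<ge> 0"
    and "\<And>m. t m m > 0"
    and "\<And>n. p n \<ge> 0"
    and "summable (\<lambda>n. p n / fact n)"
    and "(\<Sum>n. p n / fact n) > 0"
    and "\<And>n0 n. p n0 = 0 \<Longrightarrow> n0 \<le> n \<Longrightarrow> p n = 0"
    and "g \<in> borel_measurable (L \<Otimes>\<^sub>M mset_measure L)"
  shows "mixed_sample L p
           (\<lambda>\<mu>. \<Sum>\<^sub># (image_mset (\<lambda>x. g (x, \<mu>) * ennreal (delta_fn t (size \<mu>))) \<mu>))
       = mixed_sample L p
           (\<lambda>\<mu>. ennreal (pi_dens t p (size \<mu>)) * (\<integral>\<^sup>+ x. g (x, add_mset x \<mu>) \<partial>L))"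
proof (rule mixed_sample_shift)
  show "mixed_sample_term L p
          (\<lambda>\<mu>. \<Sum>\<^sub># (image_mset (\<lambda>x. g (x, \<mu>) * ennreal (delta_fn t (size \<mu>))) \<mu>)) 0 = 0"
    by (simp add: mixed_sample_term_def)
  show "mixed_sample_term L p
          (\<lambda>\<mu>. \<Sum>\<^sub># (image_mset (\<lambda>x. g (x, \<mu>) * ennreal (delta_fn t (size \<mu>))) \<mu>)) (Suc m)
      = mixed_sample_term L p
          (\<lambda>\<mu>. ennreal (pi_dens t p (size \<mu>)) * (\<integral>\<^sup>+ x. g (x, add_mset x \<mu>) \<partial>L)) m" for m
    using assms(7) by (intro mixed_sample_term_Mecke assms(1,3,5,9) assms(8)[of m "Suc m"]) auto
qed

end
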